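(* Under the Standing Setup and Assumption (G) described in the context, $$\mathcal{E}(PC_{f,\mathcal{T}})=\sum_{\alpha\in\mathbf{F}_2^{k2^{s-1}}}\ \prod_{c=0}^{2^s-1}\mathcal{E}\big(f\oplus\varphi_{\chi(c,\alpha)}\big).$$
   Context: Standing Setup. $f:\mathbf{F}_2^n\to\mathbf{F}_2$ is a Boolean function. $\mathbf{x}_1,\ldots,\mathbf{x}_n$ are binary sequences, $\mathbf{x}_j=(x_j(t))_{t\ge0}$, with $\mathbf{x}_j$ periodic of period $T_j$, i.e. $x_j(t)=x_j(t \bmod T_j)$. Let $s\ge1$ and integers $0=\ell_1<\ell_2<\cdots<\ell_{s+1}=k\le n$; variable $j$ belongs to block $i$ if $\ell_i<j\le\ell_{i+1}$. For $1\le i\le s$, $M_i=q_i\,\mathrm{lcm}(T_{\ell_i+1},\ldots,T_{\ell_{i+1}})$ with $q_i$ a positive integer. For $c=\sum_{i=1}^s c_i2^{i-1}\in\{0,\ldots,2^s-1\}$ with $c_i\in\{0,1\}$, put $\tau_c=\sum_{i=1}^s c_iM_i$, and $\mathcal{T}=\{\tau_c\}$. The parity-check sequence is $PC_{f,\mathcal{T}}(t)=\bigoplus_{c=0}^{2^s-1} f\big(x_1(t+\tau_c),\ldots,x_n(t+\tau_c)\big)$. The bias of a Boolean function $h$ of $m$ variables is $\mathcal{E}(h)=2^{-m}\sum_{x\in\mathbf{F}_2^m}(-1)^{h(x)}$. The bias $\mathcal{E}(PC_{f,\mathcal{T}})$ is the bias of $PC_{f,\mathcal{T}}(t)$ (for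 a fixed $t\ge0$) viewed as a Boolean function of the $T_1+\cdots+T_n$ bits $x_j(0),\ldots,x_j(T_j-1)$, $1\le j\le n$; equivalently $\mathbb{E}[(-1)^{PC_{f,\mathcal{T}}(t)}]$ when these bits are independent and uniform. Assumption (G): (i) for every $j$ with $k<j\le n$, the $2^s$ integers $\tau_c$ are pairwise incongruent modulo $T_j$; (ii) for every $i\in\{1,\ldots,s\}$ and every $j$ in block $i$, the $2^{s-1}$ integers $\sum_{l\ne i}c_lM_l$ ($c_l\in\{0,1\}$) are pairwise incongruent modulo $T_j$. For $\beta\in\mathbf{F}_2^n$, $\varphi_\beta$ is the linear function $x\mapsto\beta\cdot x$. The map $\chi$: write $\alpha\in\mathbf{F}_2^{k2^{s-1}}$ as $\alpha=(\alpha_1,\ldots,\alpha_k)$ with $\alpha_j=(\alpha_{j,0},\ldots,\alpha_{j,2^{s-1}-1})\in\mathbf{F}_2^{2^{s-1}}$. For $0\le c<2^s$ define $\chi(c,\alpha)=(\chi_1(c,\alpha),\ldots,\chi_k(c,\alpha),0,\ldots,0)\in\mathbf{F}_2^n$ (last $n-k$ coordinates zero), where for $j$ in block $i$, $\chi_j(c,\alpha)=\alpha_{j,m}$ with $m$ the integer obtained from the binary expansion of $c$ by deleting the bit $c_i$ (the bit of weight $2^{i-1}$); explicitly, if $c=2^iq+c_i2^{i-1}+r$ with $0\le r<2^{i-1}$, then $m=2^{i-1}q+r$. *)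

theory Defs
  imports Complex_Main "HOL-Library.FuncSet"
begin

text \<open>Vectors of F_2^m are functions nat => bool restricted to the index set {1..m}
  (elements of PiE {1..m} (\<lambda>_. UNIV)); xor is (\<noteq>) on bool.\<close>

definition F2vecs :: "nat \<Rightarrow> (nat \<Rightarrow> bool) set" where
  "F2vecs m = PiE {1..m} (\<lambda>_. UNIV)"

definition bias :: "nat \<Rightarrow> ((nat \<Rightarrow> bool) \<Rightarrow> bool) \<Rightarrow> real" where
  "bias m h = (\<Sum>x\<in>F2vecs m. if h x then -1 else 1) / 2 ^ m"

definition lin :: "nat \<Rightarrow> (nat \<Rightarrow> bool) \<Rightarrow> (nat \<Rightarrow> bool) \<Rightarrow> bool" where
  "lin m \<beta> x = odd (card {j\<in>{1..m}. \<beta> j \<and> x j})"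

definition blockM :: "(nat \<Rightarrow> nat) \<Rightarrow> (nat \<Rightarrow> nat) \<Rightarrow> (nat \<Rightarrow> nat) \<Rightarrow> nat \<Rightarrow> nat" where
  "blockM T l q i = q i * Lcm (T ` {l i + 1 .. l (Suc i)})"

text \<open>tau_c = sum_i c_i M_i, with c_i the bit of weight 2^(i-1).\<close>
definition tau :: "(nat \<Rightarrow> nat) \<Rightarrow> (nat \<Rightarrow> nat) \<Rightarrow> (nat \<Rightarrow> nat) \<Rightarrow> nat \<Rightarrow> nat \<Rightarrow> nat" where
  "tau T l q s c = (\<Sum>i=1..s. if bit c (i - 1) then blockM T l q i else 0)"

text \<open>Parity-check sequence at time t; X j r = x_j(r) for r < T_j, x_j(t) = X j (t mod T_j).\<close>
definition PC :: "((nat \<Rightarrow> bool) \<Rightarrow> bool) \<Rightarrow> nat \<Rightarrow> (nat \<Rightarrow> nat) \<Rightarrow> (nat \<Rightarrow> nat)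
    \<Rightarrow> (nat \<Rightarrow> nat) \<Rightarrow> nat \<Rightarrow> (nat \<Rightarrow> nat \<Rightarrow> bool) \<Rightarrow> nat \<Rightarrow> bool" where
  "PC f n T l q s X t =
     odd (card {c\<in>{..<2^s}. f (\<lambda>j\<in>{1..n}. X j ((t + tau T l q s c) mod T j))})"

text \<open>Bias of PC(t) as a Boolean function of the T_1+...+T_n bits x_j(r), 0 <= r < T_j.\<close>
definition bias_PC :: "((nat \<Rightarrow> bool) \<Rightarrow> bool) \<Rightarrow> nat \<Rightarrow> (nat \<Rightarrow> nat) \<Rightarrow> (nat \<Rightarrow> nat)
    \<Rightarrow> (nat \<Rightarrow> nat) \<Rightarrow> nat \<Rightarrow> nat \<Rightarrow> real" where
  "bias_PC f n T l q s t =
     (\<Sum>X\<in>PiE {1..n} (\<lambda>j. PiE {..<T j} (\<lambda>_. UNIV)). if PC f n T l q s X t then -1 else 1)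
       / 2 ^ (\<Sum>j=1..n. T j)"

definition blk :: "(nat \<Rightarrow> nat) \<Rightarrow> nat \<Rightarrow> nat \<Rightarrow> nat" where
  "blk l s j = (THE i. i \<in> {1..s} \<and> l i < j \<and> j \<le> l (Suc i))"

text \<open>Delete bit of weight 2^(i-1) from c: c = 2^i q + c_i 2^(i-1) + r gives 2^(i-1) q + r.\<close>
definition delbit :: "nat \<Rightarrow> nat \<Rightarrow> nat" where
  "delbit c i = 2 ^ (i - 1) * (c div 2 ^ i) + c mod 2 ^ (i - 1)"

text \<open>chi(c, alpha) in F_2^n; alpha j m = alpha_{j,m} for 1 <= j <= k, m < 2^(s-1).\<close>
definition chi :: "(nat \<Rightarrow> nat) \<Rightarrow> nat \<Rightarrow> nat \<Rightarrow> nat \<Rightarrow> nat \<Rightarrow> (nat \<Rightarrow> nat \<Rightarrow> bool) \<Rightarrow> nat \<Rightarrow> bool" where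
  "chi l s k n c \<alpha> = (\<lambda>j\<in>{1..n}. if j \<le> k then \<alpha> j (delbit c (blk l s j)) else False)"

end

theory Submission
  imports Defs
begin

(*
  Write sign b = (-1)^b and, for 0 <= c < 2^s, let pos c j = (t + tau_c) mod T_j, so that
  the c-th evaluation of f in PC(t) reads the input vector y_c(X) = (x_j(pos c j))_j.

  (1) Harmonic analysis on F_2^n: Fourier inversion
        sign (f y) = sum_beta bias(f + phi_beta) * sign (beta . y).
  (2) Expanding the product over c of these expansions gives a sum over families
      B = (beta_c)_c.  Summing over all T_1 + ... + T_n input bits, the term of B survives
      (with weight 2^(T_1+...+T_n)) iff B is "balanced": for every variable j and residue r
      an even number of c with pos c j = r have beta_c,j = 1.  This holds for arbitrary
      positions and yields the general expansion  parity_check_bias.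
  (3) Under Assumption (G) the fibres of c |-> pos c j are {c} for j > k and the pairs
      {c, c with bit i-1 flipped} for j in block i.  Hence the balanced families are
      exactly c |-> chi(c, alpha), bijectively in alpha  (bij_chi_family).
  The theorem follows by reindexing the sum of (2) along the bijection of (3).
*)


section \<open>Bit manipulations\<close>

text \<open>Deleting bit p of c (i.e. delbit c (Suc p)) and its right inverse, inserting a zero bit
  at position p.\<close>

definition insbit :: "nat \<Rightarrow> nat \<Rightarrow> nat" where
  "insbit m p = push_bit (Suc p) (drop_bit p m) + take_bit p m"

context
  includes bit_operations_syntax
begin

lemma bit_delbit:
  "bit (delbit c (Suc p)) m \<longleftrightarrow> (if m < p then bit c m else bit c (Suc m))"
proof -
  have "delbit c (Suc p) = push_bit p (drop_bit (Suc p) c) + take_bit p c"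
    by (simp add: delbit_def push_bit_eq_mult drop_bit_eq_div take_bit_eq_mod mult.commute)
  also have "\<dots> = push_bit p (drop_bit (Suc p) c) OR take_bit p c"
    by (rule disjunctive_add) (auto simp: bit_simps)
  finally show ?thesis by (auto simp: bit_simps)
qed

lemma bit_insbit:
  "bit (insbit m p) i \<longleftrightarrow> (if i < p then bit m i else if i = p then False else bit m (i - 1))"
proof -
  have "insbit m p = push_bit (Suc p) (drop_bit p m) OR take_bit p m"
    unfolding insbit_def by (rule disjunctive_add) (auto simp: bit_simps)
  then have "bit (insbit m p) i \<longleftrightarrow> (Suc p \<le> i \<and> bit m (p + (i - Suc p))) \<or> (i < p \<and> bit m i)"
    by (simp only: bit_or_iff bit_push_bit_iff bit_drop_bit_eq bit_take_bit_iff comp_def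
        possible_bit_def) auto
  then show ?thesis by (cases "i < p"; cases "i = p") (auto simp: Suc_diff_Suc)
qed

end

lemma less_pow2_iff_bits: "(c::nat) < 2 ^ s \<longleftrightarrow> (\<forall>i. bit c i \<longrightarrow> i < s)"
  by (auto simp: take_bit_nat_eq_self_iff[symmetric] bit_eq_iff bit_take_bit_iff)

lemma delbit_insbit: "delbit (insbit m p) (Suc p) = m"
  by (rule bit_eqI) (auto simp: bit_delbit bit_insbit)

lemma insbit_delbit: "insbit (delbit c (Suc p)) p = unset_bit p c"
  by (rule bit_eqI) (auto simp: bit_delbit bit_insbit bit_simps)

lemma delbit_flip_bit: "delbit (flip_bit p c) (Suc p) = delbit c (Suc p)"
  by (rule bit_eqI) (auto simp: bit_delbit bit_simps)

lemma insbit_less: "m < 2 ^ (s - 1) \<Longrightarrow> p < s \<Longrightarrow> insbit m p < 2 ^ s"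
  by (auto simp: less_pow2_iff_bits bit_insbit)

lemma delbit_less: "c < 2 ^ s \<Longrightarrow> p < s \<Longrightarrow> delbit c (Suc p) < 2 ^ (s - 1)"
  by (auto simp: less_pow2_iff_bits bit_delbit split: if_splits)

lemma flip_bit_less: "c < 2 ^ s \<Longrightarrow> p < s \<Longrightarrow> flip_bit p (c::nat) < 2 ^ s"
  by (auto simp: less_pow2_iff_bits bit_simps)

lemma flip_bit_flip_bit: "flip_bit p (flip_bit p c) = (c::nat)"
  by (rule bit_eqI) (auto simp: bit_flip_bit_iff)

lemma flip_bit_neq: "flip_bit p c \<noteq> (c::nat)"
  using bit_flip_bit_iff[of p c p] by auto

lemma unset_bit_eq_iff: "unset_bit p x = unset_bit p c \<longleftrightarrow> x = c \<or> x = flip_bit p (c::nat)"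
proof
  assume eq: "unset_bit p x = unset_bit p c"
  then have agree: "bit x i = bit c i" if "i \<noteq> p" for i
    using that by (metis bit_unset_bit_iff)
  show "x = c \<or> x = flip_bit p c"
  proof (cases "bit x p = bit c p")
    case True
    then have "x = c" by (intro bit_eqI) (metis agree)
    then show ?thesis ..
  next
    case False
    have "bit x i = bit (flip_bit p c) i" for i
      using False agree[of i] by (cases "i = p") (auto simp: bit_flip_bit_iff)
    then have "x = flip_bit p c" by (rule bit_eqI)
    then show ?thesis ..
  qed
next
  assume "x = c \<or> x = flip_bit p c"
  then show "unset_bit p x = unset_bit p c" by (auto intro!: bit_eqI simp: bit_simps)
qed

lemma even_card_involution:
  assumes "finite S" and closed: "\<forall>x\<in>S. g x \<in> S"
    and invol: "\<forall>x. g (g x) = x" and no_fix: "\<forall>x. g x \<noteq> x"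
  shows "even (card S)"
  using assms(1) closed
proof (induction S rule: finite_psubset_induct)
  case (psubset S)
  show ?case
  proof (cases "S = {}")
    case False
    then obtain x where x: "x \<in> S" by blast
    define S' where "S' = S - {x, g x}"
    have gx: "g x \<in> S" "g x \<noteq> x" using x psubset.prems no_fix by auto
    have "\<forall>y\<in>S'. g y \<in> S'"
      unfolding S'_def using psubset.prems invol by (metis Diff_iff insert_iff singletonD)
    then have "even (card S')" using x by (intro psubset.IH) (auto simp: S'_def)
    moreover have "card S = card S' + 2"
    proof -
      have "card {x, g x} = 2" "{x, g x} \<subseteq> S" using x gx by auto
      then show ?thesis using psubset.hyps card_mono[OF psubset.hyps \<open>{x, g x} \<subseteq> S\<close>]
        unfolding S'_def by (simp add: card_Diff_subset)
    qed
    ultimately show ?thesis by simp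
  qed simp
qed


section \<open>Signs and Fourier analysis on F_2^n\<close>

definition sign :: "bool \<Rightarrow> real" where
  "sign b = (if b then -1 else 1)"

lemma sign_odd_card:
  "finite A \<Longrightarrow> sign (odd (card {c\<in>A. P c})) = (\<Prod>c\<in>A. sign (P c))"
proof (induction A rule: finite_induct)
  case (insert x A)
  show ?case
  proof (cases "P x")
    case True
    then have "{c\<in>insert x A. P c} = insert x {c\<in>A. P c}" by auto
    then have "card {c\<in>insert x A. P c} = Suc (card {c\<in>A. P c})" using insert.hyps by simp
    then show ?thesis using True insert by (simp add: sign_def split: if_splits)
  next
    case False
    then have "{c\<in>insert x A. P c} = {c\<in>A. P c}" by auto
    then show ?thesis using False insert by (simp add: sign_def)
  qed
qed (simp add: sign_def)

lemma sign_xor: "sign (a \<noteq> b) = sign a * sign b"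
  by (simp add: sign_def)

lemma bias_sign: "bias n h = (\<Sum>x\<in>F2vecs n. sign (h x)) / 2 ^ n"
  unfolding bias_def sign_def ..

lemma sign_lin: "sign (lin n \<beta> x) = (\<Prod>j\<in>{1..n}. sign (\<beta> j \<and> x j))"
  unfolding lin_def by (rule sign_odd_card) simp

lemma finite_F2vecs: "finite (F2vecs n)"
  unfolding F2vecs_def by (simp add: finite_PiE)

lemma prod_if_zero:
  "finite I \<Longrightarrow> (\<Prod>i\<in>I. if P i then (a i :: real) else 0) = (if \<forall>i\<in>I. P i then \<Prod>i\<in>I. a i else 0)"
  by (induction I rule: finite_induct) auto

lemma sum_prod_sign_conj:
  assumes "finite I"
  shows "(\<Sum>\<beta>\<in>PiE I (\<lambda>_. UNIV). \<Prod>i\<in>I. sign (\<beta> i \<and> e i))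
           = (if \<forall>i\<in>I. \<not> e i then 2 ^ card I else 0)"
proof -
  have "(\<Sum>\<beta>\<in>PiE I (\<lambda>_. UNIV). \<Prod>i\<in>I. sign (\<beta> i \<and> e i)) = (\<Prod>i\<in>I. \<Sum>b\<in>UNIV. sign (b \<and> e i))"
    using assms by (simp add: prod_sum_PiE)
  also have "\<dots> = (\<Prod>i\<in>I. if \<not> e i then 2 else 0)"
    by (intro prod.cong) (auto simp: UNIV_bool sign_def)
  finally show ?thesis using assms by (simp add: prod_if_zero)
qed

lemma lin_orthogonality:
  assumes x: "x \<in> F2vecs n" and y: "y \<in> F2vecs n"
  shows "(\<Sum>\<beta>\<in>F2vecs n. sign (lin n \<beta> x) * sign (lin n \<beta> y)) = (if x = y then 2 ^ n else 0)"
proof -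
  have "sign (lin n \<beta> x) * sign (lin n \<beta> y) = (\<Prod>j\<in>{1..n}. sign (\<beta> j \<and> (x j \<noteq> y j)))" for \<beta>
    unfolding sign_lin prod.distrib[symmetric] by (intro prod.cong refl) (simp add: sign_def)
  then have "(\<Sum>\<beta>\<in>F2vecs n. sign (lin n \<beta> x) * sign (lin n \<beta> y))
      = (if \<forall>j\<in>{1..n}. \<not> (x j \<noteq> y j) then 2 ^ card {1..n} else 0)"
    unfolding F2vecs_def by (simp add: sum_prod_sign_conj)
  moreover have "(\<forall>j\<in>{1..n}. \<not> (x j \<noteq> y j)) \<longleftrightarrow> x = y"
    using x y unfolding F2vecs_def by (auto intro: PiE_ext)
  ultimately show ?thesis by simp
qed

lemma fourier_inversion:
  assumes y: "y \<in> F2vecs n"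
  shows "sign (f y) = (\<Sum>\<beta>\<in>F2vecs n. bias n (\<lambda>x. f x \<noteq> lin n \<beta> x) * sign (lin n \<beta> y))"
proof -
  have "(\<Sum>\<beta>\<in>F2vecs n. bias n (\<lambda>x. f x \<noteq> lin n \<beta> x) * sign (lin n \<beta> y))
      = (\<Sum>\<beta>\<in>F2vecs n. \<Sum>x\<in>F2vecs n. sign (f x) * (sign (lin n \<beta> x) * sign (lin n \<beta> y))) / 2 ^ n"
    unfolding bias_sign sign_xor sum_divide_distrib
    by (intro sum.cong refl) (simp add: sum_distrib_right mult.assoc)
  also have "\<dots> = (\<Sum>x\<in>F2vecs n. sign (f x) * (\<Sum>\<beta>\<in>F2vecs n. sign (lin n \<beta> x) * sign (lin n \<beta> y))) / 2 ^ n"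
    by (subst sum.swap) (simp only: sum_distrib_left)
  also have "\<dots> = (\<Sum>x\<in>F2vecs n. if x = y then sign (f x) * 2 ^ n else 0) / 2 ^ n"
    using y by (intro arg_cong[where f="\<lambda>z. z / 2 ^ n"] sum.cong refl) (simp add: lin_orthogonality)
  also have "\<dots> = sign (f y)" using finite_F2vecs y by simp
  finally show ?thesis ..
qed


section \<open>Parity checks of periodic sequences at arbitrary positions\<close>

definition balanced ::
    "'c set \<Rightarrow> nat \<Rightarrow> (nat \<Rightarrow> nat) \<Rightarrow> ('c \<Rightarrow> nat \<Rightarrow> nat) \<Rightarrow> ('c \<Rightarrow> nat \<Rightarrow> bool) \<Rightarrow> bool" where
  "balanced C n T pos B \<longleftrightarrow>
     (\<forall>j\<in>{1..n}. \<forall>r<T j. even (card {c\<in>C. B c j \<and> pos c j = r}))"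

lemma prod_sign_lin_regroup:
  fixes pos :: "'c \<Rightarrow> nat \<Rightarrow> nat"
  assumes "finite C" and pos_less: "\<forall>c\<in>C. \<forall>j\<in>{1..n}. pos c j < T j"
  shows "(\<Prod>c\<in>C. sign (lin n (B c) (\<lambda>j\<in>{1..n}. X j (pos c j))))
       = (\<Prod>j\<in>{1..n}. \<Prod>r\<in>{..<T j}. sign (X j r \<and> odd (card {c\<in>C. B c j \<and> pos c j = r})))"
proof -
  have fibre: "(\<Prod>c\<in>{c\<in>C. pos c j = r}. sign (B c j \<and> X j (pos c j)))
      = sign (X j r \<and> odd (card {c\<in>C. B c j \<and> pos c j = r}))" for j r
  proof -
    have "(\<Prod>c\<in>{c\<in>C. pos c j = r}. sign (B c j \<and> X j (pos c j)))
        = (\<Prod>c\<in>{c\<in>C. pos c j = r}. sign (X j r \<and> B c j))"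
      by (intro prod.cong refl) (auto simp: conj_commute)
    also have "\<dots> = sign (odd (card {c\<in>{c\<in>C. pos c j = r}. X j r \<and> B c j}))"
      by (rule sign_odd_card[symmetric]) (use assms(1) in simp)
    also have "{c\<in>{c\<in>C. pos c j = r}. X j r \<and> B c j}
        = (if X j r then {c\<in>C. B c j \<and> pos c j = r} else {})"
      by auto
    finally show ?thesis by (simp add: sign_def)
  qed
  have "(\<Prod>c\<in>C. sign (lin n (B c) (\<lambda>j\<in>{1..n}. X j (pos c j))))
      = (\<Prod>j\<in>{1..n}. \<Prod>c\<in>C. sign (B c j \<and> X j (pos c j)))"
    unfolding sign_lin by (subst prod.swap) (intro prod.cong refl; simp)
  also have "\<dots> = (\<Prod>j\<in>{1..n}. \<Prod>r\<in>{..<T j}. \<Prod>c\<in>{c\<in>C. pos c j = r}. sign (B c j \<and> X j (pos c j)))"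
    using assms by (intro prod.cong refl prod.group[symmetric]) auto
  finally show ?thesis by (simp only: fibre)
qed

lemma sum_prod_sign_lin_periodic:
  fixes pos :: "'c \<Rightarrow> nat \<Rightarrow> nat"
  assumes "finite C" and "\<forall>c\<in>C. \<forall>j\<in>{1..n}. pos c j < T j"
  shows "(\<Sum>X\<in>PiE {1..n} (\<lambda>j. PiE {..<T j} (\<lambda>_. UNIV)).
            \<Prod>c\<in>C. sign (lin n (B c) (\<lambda>j\<in>{1..n}. X j (pos c j))))
       = (if balanced C n T pos B then 2 ^ (\<Sum>j=1..n. T j) else 0)"
proof -
  let ?e = "\<lambda>j r. odd (card {c\<in>C. B c j \<and> pos c j = r})"
  have "(\<Sum>X\<in>PiE {1..n} (\<lambda>j. PiE {..<T j} (\<lambda>_. UNIV)).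
            \<Prod>c\<in>C. sign (lin n (B c) (\<lambda>j\<in>{1..n}. X j (pos c j))))
      = (\<Prod>j\<in>{1..n}. \<Sum>x\<in>PiE {..<T j} (\<lambda>_. UNIV). \<Prod>r\<in>{..<T j}. sign (x r \<and> ?e j r))"
    unfolding prod_sign_lin_regroup[OF assms] by (rule prod_sum_PiE[symmetric]) (simp_all add: finite_PiE)
  also have "\<dots> = (\<Prod>j\<in>{1..n}. if \<forall>r\<in>{..<T j}. \<not> ?e j r then 2 ^ T j else 0)"
    by (intro prod.cong refl) (simp add: sum_prod_sign_conj)
  also have "\<dots> = (if balanced C n T pos B then 2 ^ (\<Sum>j=1..n. T j) else 0)"
    by (simp add: prod_if_zero balanced_def power_sum)
  finally show ?thesis .
qed

lemma parity_check_bias: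
  fixes f :: "(nat \<Rightarrow> bool) \<Rightarrow> bool" and pos :: "'c \<Rightarrow> nat \<Rightarrow> nat"
  assumes finC: "finite C" and pos_less: "\<forall>c\<in>C. \<forall>j\<in>{1..n}. pos c j < T j"
  defines "XS \<equiv> PiE {1..n} (\<lambda>j. PiE {..<T j} (\<lambda>_. UNIV))"
  shows "(\<Sum>X\<in>XS. \<Prod>c\<in>C. sign (f (\<lambda>j\<in>{1..n}. X j (pos c j)))) / 2 ^ (\<Sum>j=1..n. T j)
       = (\<Sum>B\<in>{B\<in>PiE C (\<lambda>_. F2vecs n). balanced C n T pos B}.
            \<Prod>c\<in>C. bias n (\<lambda>x. f x \<noteq> lin n (B c) x))"
proof -
  define W where "W \<beta> = bias n (\<lambda>x. f x \<noteq> lin n \<beta> x)" for \<beta>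
  define N where "N = (\<Sum>j=1..n. T j)"
  define BS where "BS = PiE C (\<lambda>_. F2vecs n)"
  let ?y = "\<lambda>c X. \<lambda>j\<in>{1..n}. X j (pos c j)"
  have finBS: "finite BS" unfolding BS_def using finC finite_F2vecs by (simp add: finite_PiE)
  have expand: "(\<Prod>c\<in>C. sign (f (?y c X)))
      = (\<Sum>B\<in>BS. (\<Prod>c\<in>C. W (B c)) * (\<Prod>c\<in>C. sign (lin n (B c) (?y c X))))" for X
  proof -
    have "(\<Prod>c\<in>C. sign (f (?y c X))) = (\<Prod>c\<in>C. \<Sum>\<beta>\<in>F2vecs n. W \<beta> * sign (lin n \<beta> (?y c X)))"
      unfolding W_def by (intro prod.cong refl fourier_inversion) (auto simp: F2vecs_def)
    also have "\<dots> = (\<Sum>B\<in>BS. \<Prod>c\<in>C. W (B c) * sign (lin n (B c) (?y c X)))"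
      unfolding BS_def using finC finite_F2vecs by (rule prod_sum_PiE)
    finally show ?thesis by (simp add: prod.distrib)
  qed
  have "(\<Sum>X\<in>XS. \<Prod>c\<in>C. sign (f (?y c X)))
      = (\<Sum>B\<in>BS. (\<Prod>c\<in>C. W (B c)) * (\<Sum>X\<in>XS. \<Prod>c\<in>C. sign (lin n (B c) (?y c X))))"
    unfolding expand by (subst sum.swap) (simp only: sum_distrib_left)
  also have "\<dots> = (\<Sum>B\<in>BS. if balanced C n T pos B then (\<Prod>c\<in>C. W (B c)) * 2 ^ N else 0)"
    unfolding XS_def N_def sum_prod_sign_lin_periodic[OF finC pos_less] by (intro sum.cong refl) simp
  also have "\<dots> = (\<Sum>B\<in>{B\<in>BS. balanced C n T pos B}. \<Prod>c\<in>C. W (B c)) * 2 ^ N"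
    using finBS by (simp add: sum.inter_filter[symmetric] sum_distrib_right)
  finally show ?thesis unfolding W_def N_def BS_def by simp
qed

lemma bias_PC_as_prod_sign:
  "bias_PC f n T l q s t =
     (\<Sum>X\<in>PiE {1..n} (\<lambda>j. PiE {..<T j} (\<lambda>_. UNIV)).
        \<Prod>c<2 ^ s. sign (f (\<lambda>j\<in>{1..n}. X j ((t + tau T l q s c) mod T j)))) / 2 ^ (\<Sum>j=1..n. T j)"
proof -
  have "(if PC f n T l q s X t then -1 else 1)
      = (\<Prod>c<2 ^ s. sign (f (\<lambda>j\<in>{1..n}. X j ((t + tau T l q s c) mod T j))))" for X
    unfolding PC_def sign_def[symmetric] by (rule sign_odd_card) simp
  then show ?thesis unfolding bias_PC_def by simp
qed


section \<open>Blocks and the shifts tau_c\<close>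

lemma boundaries_strict:
  assumes "\<forall>i\<in>{1..s}. l i < l (Suc i)" "1 \<le> a" "a < b" "b \<le> Suc s"
  shows "(l a :: nat) < l b"
  using assms(3,4)
proof (induction b)
  case (Suc b)
  show ?case
  proof (cases "a = b")
    case False
    then have "l a < l b" "l b < l (Suc b)" using Suc assms(1,2) by auto
    then show ?thesis by simp
  qed (use Suc assms(1,2) in auto)
qed simp

lemma blk_eq:
  assumes mono: "\<forall>i\<in>{1..s}. l i < l (Suc i)" and i: "i \<in> {1..s}" "l i < j" "j \<le> l (Suc i)"
  shows "blk l s j = i"
  unfolding blk_def
proof (rule the_equality)
  fix i' assume i': "i' \<in> {1..s} \<and> l i' < j \<and> j \<le> l (Suc i')"
  have no_overlap: "\<not> a < b" if "a \<in> {1..s}" "b \<in> {1..s}" "j \<le> l (Suc a)" "l b < j" for a b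
  proof
    assume "a < b"
    then have "l (Suc a) \<le> l b"
      using boundaries_strict[OF mono, of "Suc a" b] that by (cases "Suc a = b") auto
    then show False using that by simp
  qed
  show "i' = i" using no_overlap[of i' i] no_overlap[of i i'] i i' by auto
qed (use i in auto)

lemma block_exists:
  assumes "\<forall>i\<in>{1..s}. l i < l (Suc i)" "m \<le> s" "l 1 < j" "j \<le> l (Suc m)"
  shows "\<exists>i\<in>{1..m}. l i < (j::nat) \<and> j \<le> l (Suc i)"
  using assms(2-4)
proof (induction m)
  case (Suc m)
  show ?case
  proof (cases "j \<le> l (Suc m)")
    case True
    then show ?thesis using Suc by force
  next
    case False
    then show ?thesis using Suc.prems by (intro bexI[of _ "Suc m"]) auto
  qed
qed simp

lemma dvd_blockM: "l i < j \<Longrightarrow> j \<le> l (Suc i) \<Longrightarrow> T j dvd blockM T l q i"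
  unfolding blockM_def by (intro dvd_mult dvd_Lcm) auto

text \<open>For j in block i, M_i vanishes mod T_j, so tau_c mod T_j ignores the bit c_i.\<close>
lemma tau_mod_other_bits:
  assumes i: "i \<in> {1..s}" and dvd: "T j dvd blockM T l q i"
    and agree: "\<And>m. m \<noteq> i - 1 \<Longrightarrow> bit c m = bit c' m"
  shows "tau T l q s c mod T j = tau T l q s c' mod T j"
proof -
  let ?g = "\<lambda>c i. if bit c (i - 1) then blockM T l q i else 0"
  have split: "tau T l q s x = ?g x i + (\<Sum>i'\<in>{1..s}-{i}. ?g x i')" for x
    unfolding tau_def using i by (simp add: sum.remove)
  have rest: "(\<Sum>i'\<in>{1..s}-{i}. ?g c i') = (\<Sum>i'\<in>{1..s}-{i}. ?g c' i')"
  proof (intro sum.cong refl)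
    fix i' assume "i' \<in> {1..s} - {i}"
    then have "i' - 1 \<noteq> i - 1" using i by auto
    then show "?g c i' = ?g c' i'" using agree by simp
  qed
  have drop_block: "(?g x i + A) mod T j = A mod T j" for x A
    using dvd by (auto simp: mod_add_left_eq[symmetric])
  show ?thesis unfolding split rest drop_block ..
qed


section \<open>Balanced families under Assumption (G)\<close>

text \<open>The block structure together with Assumption (G).\<close>
locale parity_check_periods =
  fixes n k s t :: nat and T q l :: "nat \<Rightarrow> nat"
  assumes l_first: "l 1 = 0"
    and l_mono: "\<forall>i\<in>{1..s}. l i < l (Suc i)"
    and l_last: "l (Suc s) = k"
    and k_le: "k \<le> n"
    and T_pos: "\<forall>j\<in>{1..n}. T j > 0"
    and G1: "\<forall>j\<in>{k+1..n}. inj_on (\<lambda>c. tau T l q s c mod T j) {..<2^s}"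
    and G2: "\<forall>i\<in>{1..s}. \<forall>j. l i < j \<and> j \<le> l (Suc i) \<longrightarrow>
               inj_on (\<lambda>c. tau T l q s c mod T j) {c\<in>{..<2^s}. \<not> bit c (i - 1)}"
begin

definition pos :: "nat \<Rightarrow> nat \<Rightarrow> nat" where
  "pos c j = (t + tau T l q s c) mod T j"

definition chi_family :: "(nat \<Rightarrow> nat \<Rightarrow> bool) \<Rightarrow> nat \<Rightarrow> nat \<Rightarrow> bool" where
  "chi_family \<alpha> = (\<lambda>c\<in>{..<2^s}. chi l s k n c \<alpha>)"

definition coeffs :: "(nat \<Rightarrow> nat \<Rightarrow> bool) \<Rightarrow> nat \<Rightarrow> nat \<Rightarrow> bool" where
  "coeffs B = (\<lambda>j\<in>{1..k}. \<lambda>m\<in>{..<2^(s-1)}. B (insbit m (blk l s j - 1)) j)"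

abbreviation alphas :: "(nat \<Rightarrow> nat \<Rightarrow> bool) set" where
  "alphas \<equiv> PiE {1..k} (\<lambda>_. PiE {..<2^(s-1)} (\<lambda>_. UNIV))"

abbreviation balanced_families :: "(nat \<Rightarrow> nat \<Rightarrow> bool) set" where
  "balanced_families \<equiv> {B\<in>PiE {..<2^s} (\<lambda>_. F2vecs n). balanced {..<2^s} n T pos B}"

lemma pos_less: "j \<in> {1..n} \<Longrightarrow> pos c j < T j"
  unfolding pos_def using T_pos by simp

lemma pos_eq_iff: "pos x j = pos c j \<longleftrightarrow> tau T l q s x mod T j = tau T l q s c mod T j"
  unfolding pos_def by (simp add: nat_mod_eq_iff)

text \<open>Every variable j <= k lies in a block Suc p; bit p of c is the bit c_(p+1).\<close>
lemma block_of:
  assumes "j \<in> {1..k}"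
  obtains p where "Suc p \<in> {1..s}" "l (Suc p) < j" "j \<le> l (Suc (Suc p))" "blk l s j = Suc p"
proof -
  obtain i where i: "i \<in> {1..s}" "l i < j" "j \<le> l (Suc i)"
    using block_exists[OF l_mono, of s j] assms l_first l_last by auto
  then obtain p where "i = Suc p" by (cases i) auto
  then show ?thesis using that i blk_eq[OF l_mono i] by auto
qed

text \<open>Fibres of c |-> pos c j: for j in block Suc p, the pairs {c, c with bit p flipped}
  (by (G)(ii)); for j > k, singletons (by (G)(i)).\<close>
lemma fibre_in_block:
  assumes p: "Suc p \<in> {1..s}" "l (Suc p) < j" "j \<le> l (Suc (Suc p))" and c: "c < 2^s"
  shows "{x\<in>{..<2^s}. pos x j = pos c j} = {c, flip_bit p c}"
proof -
  have tau_unset: "tau T l q s (unset_bit p y) mod T j = tau T l q s y mod T j" for y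
    by (rule tau_mod_other_bits[OF p(1) dvd_blockM[where l=l and i="Suc p", OF p(2,3)]])
      (auto simp: bit_unset_bit_iff)
  have inj: "inj_on (\<lambda>c. tau T l q s c mod T j) {c\<in>{..<2^s}. \<not> bit c p}"
    using G2 p by fastforce
  have "pos x j = pos c j \<longleftrightarrow> unset_bit p x = unset_bit p c" if x: "x < 2^s" for x
  proof
    assume "pos x j = pos c j"
    then have "tau T l q s (unset_bit p x) mod T j = tau T l q s (unset_bit p c) mod T j"
      by (simp add: pos_eq_iff tau_unset)
    moreover have "unset_bit p y \<in> {c\<in>{..<2^s}. \<not> bit c p}" if "y < 2^s" for y :: nat
      using that by (auto simp: less_pow2_iff_bits bit_simps)
    ultimately show "unset_bit p x = unset_bit p c" using inj x c by (meson inj_onD)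
  qed (metis pos_eq_iff tau_unset)
  moreover have "p < s" using p by auto
  ultimately show ?thesis using c by (auto simp: unset_bit_eq_iff flip_bit_less)
qed

lemma fibre_outside:
  assumes j: "j \<in> {k+1..n}" and c: "c < 2^s"
  shows "{x\<in>{..<2^s}. pos x j = pos c j} = {c}"
  using G1 j c by (auto simp: pos_eq_iff dest: inj_onD)

lemma balanced_even_fibre:
  assumes "balanced {..<2^s} n T pos B" and "j \<in> {1..n}"
  shows "even (card {x\<in>{x\<in>{..<2^s}. pos x j = pos c j}. B x j})"
proof -
  have "{x\<in>{x\<in>{..<2^s}. pos x j = pos c j}. B x j} = {x\<in>{..<2^s}. B x j \<and> pos x j = pos c j}"
    by auto
  then show ?thesis using assms pos_less unfolding balanced_def by auto
qed

lemma balanced_outside: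
  assumes "balanced {..<2^s} n T pos B" and j: "j \<in> {k+1..n}" and c: "c < 2^s"
  shows "\<not> B c j"
proof -
  have "even (card {x\<in>{c}. B x j})"
    using balanced_even_fibre[OF assms(1), of j c] j k_le unfolding fibre_outside[OF j c] by simp
  moreover have "{x\<in>{c}. B x j} = (if B c j then {c} else {})" by auto
  ultimately show ?thesis by (auto split: if_splits)
qed

lemma balanced_in_block:
  assumes "balanced {..<2^s} n T pos B"
    and p: "Suc p \<in> {1..s}" "l (Suc p) < j" "j \<le> l (Suc (Suc p))" and c: "c < 2^s"
  shows "B (flip_bit p c) j = B c j"
proof -
  have "j \<in> {1..n}" using p k_le l_last boundaries_strict[OF l_mono, of "Suc (Suc p)" "Suc s"]
    by (cases "Suc p = s") auto
  then have "even (card {x\<in>{c, flip_bit p c}. B x j})"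
    using balanced_even_fibre[OF assms(1), of j c] unfolding fibre_in_block[OF p c] by blast
  moreover have "{x\<in>{c, flip_bit p c}. B x j}
      = (if B c j then {c} else {}) \<union> (if B (flip_bit p c) j then {flip_bit p c} else {})"
    by auto
  ultimately show ?thesis using flip_bit_neq[of p c]
    by (cases "B c j"; cases "B (flip_bit p c) j") auto
qed

text \<open>Conversely every chi_family is balanced: its residue classes are unions of pairs
  {c, c with bit p flipped}, on which chi is constant.\<close>
lemma chi_family_balanced: "balanced {..<2^s} n T pos (chi_family \<alpha>)"
  unfolding balanced_def
proof (intro ballI allI impI)
  fix j r assume j: "j \<in> {1..n}"
  let ?S = "{c\<in>{..<2^s}. chi l s k n c \<alpha> j \<and> pos c j = r}"
  have "{c\<in>{..<2^s}. chi_family \<alpha> c j \<and> pos c j = r} = ?S"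
    by (auto simp: chi_family_def)
  moreover have "even (card ?S)"
  proof (cases "j \<le> k")
    case False
    then have "?S = {}" using j by (auto simp: chi_def)
    then show ?thesis by (metis card.empty even_zero)
  next
    case True
    then obtain p where p: "Suc p \<in> {1..s}" "l (Suc p) < j" "j \<le> l (Suc (Suc p))" "blk l s j = Suc p"
      using block_of[of j] j by auto
    have "flip_bit p c \<in> ?S" if c: "c \<in> ?S" for c
    proof -
      have "c < 2^s" using c by simp
      then have "flip_bit p c \<in> {x\<in>{..<2^s}. pos x j = pos c j}"
        using fibre_in_block[OF p(1-3)] by blast
      moreover have "chi l s k n (flip_bit p c) \<alpha> j = chi l s k n c \<alpha> j"
        using j p by (simp add: chi_def delbit_flip_bit)
      ultimately show ?thesis using c by auto
    qed
    then show ?thesis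
      by (intro even_card_involution[where g="flip_bit p"]) (auto simp: flip_bit_flip_bit flip_bit_neq)
  qed
  ultimately show "even (card {c\<in>{..<2^s}. chi_family \<alpha> c j \<and> pos c j = r})" by simp
qed

lemma chi_family_in: "chi_family \<alpha> \<in> balanced_families"
  using chi_family_balanced by (auto simp: chi_family_def chi_def F2vecs_def)

lemma coeffs_in: "coeffs B \<in> alphas"
  unfolding coeffs_def by auto

lemma coeffs_chi_family:
  assumes \<alpha>: "\<alpha> \<in> alphas"
  shows "coeffs (chi_family \<alpha>) = \<alpha>"
proof (rule PiE_ext[OF coeffs_in \<alpha>])
  fix j assume j: "j \<in> {1..k}"
  obtain p where p: "Suc p \<in> {1..s}" "blk l s j = Suc p" using block_of[OF j] by blast
  show "coeffs (chi_family \<alpha>) j = \<alpha> j"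
  proof (rule PiE_ext)
    show "coeffs (chi_family \<alpha>) j \<in> PiE {..<2^(s-1)} (\<lambda>_. UNIV)" "\<alpha> j \<in> PiE {..<2^(s-1)} (\<lambda>_. UNIV)"
      using j \<alpha> by (auto simp: coeffs_def)
    fix m :: nat assume m: "m \<in> {..<2^(s-1)}"
    then have "insbit m p < 2^s" using p by (simp add: insbit_less)
    then show "coeffs (chi_family \<alpha>) j m = \<alpha> j m"
      using j m p k_le by (simp add: coeffs_def chi_family_def chi_def delbit_insbit)
  qed
qed

lemma chi_coeffs:
  assumes B: "B \<in> balanced_families" and c: "c < 2^s" and j: "j \<in> {1..n}"
  shows "chi l s k n c (coeffs B) j = B c j"
proof (cases "j \<le> k")
  case False
  then show ?thesis using B c j balanced_outside[of B j c] by (simp add: chi_def)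
next
  case True
  then obtain p where p: "Suc p \<in> {1..s}" "l (Suc p) < j" "j \<le> l (Suc (Suc p))" "blk l s j = Suc p"
    using block_of[of j] j by auto
  have "chi l s k n c (coeffs B) j = B (unset_bit p c) j"
    using j True p c delbit_less[of c s p] by (simp add: chi_def coeffs_def insbit_delbit)
  also have "\<dots> = B c j"
  proof -
    have "unset_bit p (unset_bit p c) = unset_bit p c" by (rule bit_eqI) (simp add: bit_simps)
    then consider "unset_bit p c = c" | "unset_bit p c = flip_bit p c" using unset_bit_eq_iff by blast
    then show ?thesis using balanced_in_block[OF _ p(1-3) c] B by cases auto
  qed
  finally show ?thesis .
qed

lemma chi_family_coeffs:
  assumes B: "B \<in> balanced_families"
  shows "chi_family (coeffs B) = B"
proof (rule PiE_ext)
  show "chi_family (coeffs B) \<in> PiE {..<2^s} (\<lambda>_. F2vecs n)" "B \<in> PiE {..<2^s} (\<lambda>_. F2vecs n)"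
    using chi_family_in B by auto
  fix c :: nat assume c: "c \<in> {..<2^s}"
  show "chi_family (coeffs B) c = B c"
  proof (rule PiE_ext)
    show "chi_family (coeffs B) c \<in> PiE {1..n} (\<lambda>_. UNIV)" "B c \<in> PiE {1..n} (\<lambda>_. UNIV)"
      using B c by (auto simp: chi_family_def chi_def F2vecs_def)
  qed (use c chi_coeffs[OF B] in \<open>simp add: chi_family_def\<close>)
qed

lemma bij_chi_family: "bij_betw chi_family alphas balanced_families"
proof (rule bij_betw_byWitness[where f'=coeffs])
  show "\<forall>\<alpha>\<in>alphas. coeffs (chi_family \<alpha>) = \<alpha>" using coeffs_chi_family by blast
  show "\<forall>B\<in>balanced_families. chi_family (coeffs B) = B" using chi_family_coeffs by blast
  show "chi_family ` alphas \<subseteq> balanced_families" using chi_family_in by blast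
  show "coeffs ` balanced_families \<subseteq> alphas" using coeffs_in by blast
qed

end


theorem theorem3:
  fixes f :: "(nat \<Rightarrow> bool) \<Rightarrow> bool"
    and n k s t :: nat
    and T q l :: "nat \<Rightarrow> nat"
  assumes s_pos: "s \<ge> 1"
    and l_first: "l 1 = 0"
    and l_mono: "\<forall>i\<in>{1..s}. l i < l (Suc i)"
    and l_last: "l (Suc s) = k"
    and k_le: "k \<le> n"
    and T_pos: "\<forall>j\<in>{1..n}. T j > 0"
    and q_pos: "\<forall>i\<in>{1..s}. q i > 0"
    and G1: "\<forall>j\<in>{k+1..n}. inj_on (\<lambda>c. tau T l q s c mod T j) {..<2^s}"
    and G2: "\<forall>i\<in>{1..s}. \<forall>j. l i < j \<and> j \<le> l (Suc i) \<longrightarrow>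
               inj_on (\<lambda>c. tau T l q s c mod T j) {c\<in>{..<2^s}. \<not> bit c (i - 1)}"
  shows "bias_PC f n T l q s t =
    (\<Sum>\<alpha>\<in>PiE {1..k} (\<lambda>_. PiE {..<2^(s-1)} (\<lambda>_. UNIV)).
       \<Prod>c<2^s. bias n (\<lambda>x. f x \<noteq> lin n (chi l s k n c \<alpha>) x))"
proof -
  interpret parity_check_periods n k s t T q l
    using l_first l_mono l_last k_le T_pos G1 G2 by unfold_locales
  let ?W = "\<lambda>\<beta>. bias n (\<lambda>x. f x \<noteq> lin n \<beta> x)"
  have "bias_PC f n T l q s t =
     (\<Sum>X\<in>PiE {1..n} (\<lambda>j. PiE {..<T j} (\<lambda>_. UNIV)).
        \<Prod>c<2 ^ s. sign (f (\<lambda>j\<in>{1..n}. X j (pos c j)))) / 2 ^ (\<Sum>j=1..n. T j)"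
    unfolding bias_PC_as_prod_sign pos_def ..
  also have "\<dots> = (\<Sum>B\<in>balanced_families. \<Prod>c<2^s. ?W (B c))"
    by (rule parity_check_bias) (simp_all add: pos_less)
  also have "\<dots> = (\<Sum>\<alpha>\<in>alphas. \<Prod>c<2^s. ?W (chi_family \<alpha> c))"
    by (rule sum.reindex_bij_betw[OF bij_chi_family, symmetric])
  also have "\<dots> = (\<Sum>\<alpha>\<in>alphas. \<Prod>c<2^s. ?W (chi l s k n c \<alpha>))"
    by (intro sum.cong prod.cong refl) (simp add: chi_family_def)
  finally show ?thesis .
qed

end
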